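(* Let $(\boldsymbol A,\mathcal S)$ be a data pair and $\boldsymbol M$, $\rho$, $d_\rho$ as in the context. Then (i) for all $z\in\mathbb H$, \[ \|\boldsymbol M(z)\|_2\le\frac{1}{d_\rho(z)},\qquad (\operatorname{Im}z)\|\boldsymbol M(z)^{-1}\|_2^{-2}\,1\le\operatorname{Im}\boldsymbol M(z)\le\frac{\operatorname{Im}z}{d_\rho(z)^2}\,1,\qquad \|\boldsymbol M(z)^{-1}\|_2\le|z|+\|\boldsymbol A\|_2+\|\mathcal S\|\,\|\boldsymbol M(z)\|_2; \] (ii) for all $z\in\mathbb H$, $\rho(z)\le\dfrac{\operatorname{Im}z}{\pi d_\rho(z)^2}$.
   Context: $\mathbb H=\{w\in\mathbb C:\operatorname{Im}w>0\}$. On $\mathbb C^{n\times n}$: $\langle\boldsymbol R,\boldsymbol T\rangle=\frac1n\operatorname{Tr}(\boldsymbol R^*\boldsymbol T)$, $\langle\boldsymbol R\rangle=\frac1n\operatorname{Tr}\boldsymbol R$, $\|\cdot\|_2$ the operator norm induced by the Euclidean norm, $\|\mathcal S\|$ the operator norm of a linear map $\mathcal S$ on $\mathbb C^{n\times n}$ induced by $\|\cdot\|_2$; inequalities between Hermitian matrices are in the positive semidefinite order. A data pair $(\boldsymbol A,\mathcal S)$: $\boldsymbol A\in\mathbb C^{n\times n}$ with $\operatorname{Im}\boldsymbol A=\frac1{2i}(\boldsymbol A-\boldsymbol A^* )\le0$, and $\mathcal S$ linear, self-adjoint w.r.t. $\langle\cdot,\cdot\rangle$, positivity preserving. $\boldsymbol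 M(z)$ is the unique solution of $-\boldsymbol M(z)^{-1}=z1-\boldsymbol A+\mathcal S[\boldsymbol M(z)]$ with positive definite imaginary part; it has the representation $\boldsymbol M(z)=\int\frac{\boldsymbol V(d\tau)}{\tau-z}$ with a unique positive semidefinite matrix-valued measure $\boldsymbol V$, $\boldsymbol V(\mathbb R)=1$. The self-consistent density of states is $\rho(d\tau)=\frac1n\operatorname{Tr}\boldsymbol V(d\tau)$, its harmonic extension is $\rho(z)=\frac1\pi\langle\operatorname{Im}\boldsymbol M(z)\rangle$, and $d_\rho(z)=\operatorname{dist}(z,\operatorname{supp}\rho)$. *)

theory Defs
  imports "HOL-Analysis.Analysis"
begin

(* n x n complex matrices are modelled as complex^'n^'n, with 'n a finite index type, n = CARD('n) *)

definition cscale :: "complex \<Rightarrow> complex^'n^'m \<Rightarrow> complex^'n^'m" where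
  "cscale c R = (\<chi> i j. c * R$i$j)"

definition adj :: "complex^'n^'m \<Rightarrow> complex^'m^'n" where
  "adj R = (\<chi> i j. cnj (R$j$i))"

definition hermitian :: "complex^'n^'n \<Rightarrow> bool" where
  "hermitian R \<longleftrightarrow> adj R = R"

definition qf :: "complex^'n \<Rightarrow> complex^'n^'n \<Rightarrow> complex" where
  "qf x R = (\<Sum>i\<in>UNIV. cnj (x$i) * (R *v x)$i)"

definition psd :: "complex^'n^'n \<Rightarrow> bool" where
  "psd R \<longleftrightarrow> hermitian R \<and> (\<forall>x. 0 \<le> Re (qf x R))"

definition pd :: "complex^'n^'n \<Rightarrow> bool" where
  "pd R \<longleftrightarrow> hermitian R \<and> (\<forall>x. x \<noteq> 0 \<longrightarrow> 0 < Re (qf x R))"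

definition loewner_le :: "complex^'n^'n \<Rightarrow> complex^'n^'n \<Rightarrow> bool" where
  "loewner_le R T \<longleftrightarrow> psd (T - R)"

definition ImM :: "complex^'n^'n \<Rightarrow> complex^'n^'n" where
  "ImM R = cscale (1 / (2 * \<i>)) (R - adj R)"

definition mtrace :: "complex^'n^'n \<Rightarrow> complex" where
  "mtrace R = (\<Sum>i\<in>UNIV. R$i$i)"

definition inner_hs :: "complex^'n^'n \<Rightarrow> complex^'n^'n \<Rightarrow> complex" where
  "inner_hs R T = mtrace (adj R ** T) / of_nat CARD('n)"

(* operator norm induced by the Euclidean norm (norm on complex^'n is the Euclidean norm) *)
definition opnorm2 :: "complex^'n^'n \<Rightarrow> real" where
  "opnorm2 R = onorm (\<lambda>x. R *v x)"

definition opnorm_S :: "(complex^'n^'n \<Rightarrow> complex^'n^'n) \<Rightarrow> real" where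
  "opnorm_S S = (SUP R\<in>{R. opnorm2 R \<le> 1}. opnorm2 (S R))"

definition data_pair :: "complex^'n^'n \<Rightarrow> (complex^'n^'n \<Rightarrow> complex^'n^'n) \<Rightarrow> bool" where
  "data_pair A S \<longleftrightarrow>
     loewner_le (ImM A) 0 \<and>
     (\<forall>R T. S (R + T) = S R + S T) \<and>
     (\<forall>c R. S (cscale c R) = cscale c (S R)) \<and>
     (\<forall>R T. inner_hs R (S T) = inner_hs (S R) T) \<and>
     (\<forall>R. psd R \<longrightarrow> psd (S R))"

definition solves_MDE ::
  "complex^'n^'n \<Rightarrow> (complex^'n^'n \<Rightarrow> complex^'n^'n) \<Rightarrow> (complex \<Rightarrow> complex^'n^'n) \<Rightarrow> bool" where
  "solves_MDE A S M \<longleftrightarrow>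
     (\<forall>z. 0 < Im z \<longrightarrow>
        invertible (M z) \<and>
        - matrix_inv (M z) = cscale z (mat 1) - A + S (M z) \<and>
        pd (ImM (M z)))"

definition psd_matrix_measure :: "(real set \<Rightarrow> complex^'n^'n) \<Rightarrow> bool" where
  "psd_matrix_measure V \<longleftrightarrow>
     (\<forall>B\<in>sets borel. psd (V B)) \<and> V {} = 0 \<and>
     (\<forall>F. range F \<subseteq> sets borel \<longrightarrow> disjoint_family F \<longrightarrow>
          (\<lambda>k. V (F k)) sums V (\<Union>k. F k))"

definition qmeasure :: "(real set \<Rightarrow> complex^'n^'n) \<Rightarrow> complex^'n \<Rightarrow> real measure" where
  "qmeasure V x = measure_of UNIV (sets borel) (\<lambda>B. ennreal (Re (qf x (V B))))"

(* M(z) = \<integral> V(d\<tau>)/(\<tau> - z), stated through all quadratic forms (these determine a matrix by polarization) *)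
definition stieltjes_rep :: "(real set \<Rightarrow> complex^'n^'n) \<Rightarrow> (complex \<Rightarrow> complex^'n^'n) \<Rightarrow> bool" where
  "stieltjes_rep V M \<longleftrightarrow>
     (\<forall>z. 0 < Im z \<longrightarrow> (\<forall>x. qf x (M z) =
        (LINT \<tau>|qmeasure V x. 1 / (complex_of_real \<tau> - z))))"

definition dos :: "(real set \<Rightarrow> complex^'n^'n) \<Rightarrow> real measure" where
  "dos V = measure_of UNIV (sets borel) (\<lambda>B. ennreal (Re (mtrace (V B)) / real CARD('n)))"

definition msupp :: "real measure \<Rightarrow> real set" where
  "msupp \<mu> = {\<tau>. \<forall>e>0. emeasure \<mu> (ball \<tau> e) > 0}"

definition d_rho :: "real measure \<Rightarrow> complex \<Rightarrow> real" where
  "d_rho \<mu> z = infdist z (complex_of_real ` msupp \<mu>)"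

definition rho_ext :: "(complex \<Rightarrow> complex^'n^'n) \<Rightarrow> complex \<Rightarrow> real" where
  "rho_ext M z = Re (mtrace (ImM (M z)) / of_nat CARD('n)) / pi"

end

theory Submission
  imports Defs
begin

(*
  Sandwiching the imaginary part of the Dyson equation between M(z)* and M(z) gives
  Im M = M* (Im z - Im A + S[Im M]) M >= (Im z) M* M, because -Im A and S[Im M] are
  positive semidefinite. On the other hand, the Stieltjes representation writes
  Im <x, M x> as the integral of Im z / |tau - z|^2 against the measure <x, V x>, which is
  absolutely continuous with respect to rho and hence lives on supp rho; there the integrand
  is at most Im z / d_rho(z)^2. Comparing the two bounds yields |M x| <= |x| / d_rho(z);
  the lower bound on Im M follows from |x| <= |M^-1| |M x|, the bound on M^-1 is the
  triangle inequality applied to the Dyson equation, and rho(z) is the normalized trace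
  of the upper bound on Im M.
*)

section \<open>Quadratic forms and the Loewner order\<close>

definition vinner :: "complex^'n \<Rightarrow> complex^'n \<Rightarrow> complex" where
  "vinner x y = (\<Sum>i\<in>UNIV. cnj (x$i) * y$i)"

lemma qf_eq_vinner: "qf x R = vinner x (R *v x)"
  by (simp add: qf_def vinner_def)

lemma qf_eq_double_sum: "qf x R = (\<Sum>i\<in>UNIV. \<Sum>j\<in>UNIV. cnj (x$i) * R$i$j * x$j)"
  by (simp add: qf_def matrix_vector_mult_def sum_distrib_left mult.assoc)

lemma qf_add: "qf x (R + T) = qf x R + qf x T"
  by (simp add: qf_eq_double_sum algebra_simps sum.distrib)

lemma qf_diff: "qf x (R - T) = qf x R - qf x T"
  by (simp add: qf_eq_double_sum algebra_simps sum_subtractf)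

lemma qf_uminus: "qf x (- R) = - qf x R"
  by (simp add: qf_eq_double_sum sum_negf)

lemma qf_zero: "qf x 0 = 0"
  by (simp add: qf_eq_double_sum)

lemma qf_cscale: "qf x (cscale c R) = c * qf x R"
  by (simp add: qf_eq_double_sum cscale_def sum_distrib_left algebra_simps)

lemma qf_mat_1: "qf x (mat 1) = of_real ((norm x)\<^sup>2)"
proof -
  have "qf x (mat 1) = (\<Sum>i\<in>UNIV. of_real ((norm (x$i))\<^sup>2))"
    unfolding qf_def matrix_vector_mul_lid
    by (intro sum.cong refl) (metis complex_norm_square mult.commute)
  also have "\<dots> = of_real ((norm x)\<^sup>2)"
    by (simp add: norm_vec_def L2_set_def sum_nonneg)
  finally show ?thesis .
qed

lemma Re_qf_scalar_matrix: "Re (qf x (cscale (of_real c) (mat 1))) = c * (norm x)\<^sup>2"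
  by (simp add: qf_cscale qf_mat_1)

lemma adj_add: "adj (R + T) = adj R + adj T"
  by (simp add: adj_def vec_eq_iff)

lemma adj_diff: "adj (R - T) = adj R - adj T"
  by (simp add: adj_def vec_eq_iff)

lemma adj_cscale: "adj (cscale c R) = cscale (cnj c) (adj R)"
  by (simp add: adj_def cscale_def vec_eq_iff)

lemma adj_mat_1: "adj (mat 1 :: complex^'n^'n) = mat 1"
  by (simp add: adj_def mat_def vec_eq_iff)

lemma adj_matrix_mult: "adj (R ** T) = adj T ** adj R"
  by (simp add: adj_def matrix_matrix_mult_def vec_eq_iff mult.commute)

lemma vinner_adj: "vinner x (adj P *v y) = vinner (P *v x) y"
proof -
  have "vinner x (adj P *v y) = (\<Sum>i\<in>UNIV. \<Sum>j\<in>UNIV. cnj (x$i) * cnj (P$j$i) * y$j)"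
    by (simp add: vinner_def matrix_vector_mult_def adj_def sum_distrib_left mult.assoc)
  also have "\<dots> = (\<Sum>j\<in>UNIV. \<Sum>i\<in>UNIV. cnj (x$i) * cnj (P$j$i) * y$j)"
    by (rule sum.swap)
  also have "\<dots> = vinner (P *v x) y"
    by (simp add: vinner_def matrix_vector_mult_def sum_distrib_right sum_distrib_left algebra_simps)
  finally show ?thesis .
qed

lemma qf_adj_sandwich: "qf x (adj P ** Q ** P) = qf (P *v x) Q"
  by (simp add: qf_eq_vinner vinner_adj flip: matrix_vector_mul_assoc)

lemma qf_adj: "qf x (adj R) = cnj (qf x R)"
proof -
  have "qf x (adj R) = (\<Sum>i\<in>UNIV. \<Sum>j\<in>UNIV. cnj (x$i) * cnj (R$j$i) * x$j)"
    by (simp add: qf_eq_double_sum adj_def)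
  also have "\<dots> = (\<Sum>j\<in>UNIV. \<Sum>i\<in>UNIV. cnj (x$i) * cnj (R$j$i) * x$j)"
    by (rule sum.swap)
  also have "\<dots> = cnj (qf x R)"
    by (simp add: qf_eq_double_sum algebra_simps)
  finally show ?thesis .
qed

lemma hermitian_Im_qf: "hermitian R \<Longrightarrow> Im (qf x R) = 0"
  using qf_adj[of x R] unfolding hermitian_def by (metis cnj.sel(2) neg_equal_zero)

lemma hermitian_ImM: "hermitian (ImM R)"
  unfolding hermitian_def ImM_def by (simp add: adj_def cscale_def vec_eq_iff field_simps)

lemma qf_ImM: "qf x (ImM R) = of_real (Im (qf x R))"
  unfolding ImM_def by (simp add: qf_cscale qf_diff qf_adj complex_diff_cnj field_simps)

lemma hermitian_add: "hermitian R \<Longrightarrow> hermitian T \<Longrightarrow> hermitian (R + T)"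
  by (simp add: hermitian_def adj_add)

lemma hermitian_diff: "hermitian R \<Longrightarrow> hermitian T \<Longrightarrow> hermitian (R - T)"
  by (simp add: hermitian_def adj_diff)

lemma hermitian_cscale_of_real: "hermitian R \<Longrightarrow> hermitian (cscale (of_real c) R)"
  by (simp add: hermitian_def adj_cscale)

lemma hermitian_mat_1: "hermitian (mat 1 :: complex^'n^'n)"
  by (simp add: hermitian_def adj_mat_1)

lemma psd_Re_qf_nonneg: "psd R \<Longrightarrow> 0 \<le> Re (qf x R)"
  by (simp add: psd_def)

lemma pd_imp_psd:
  assumes "pd R"
  shows "psd R"
  unfolding psd_def
proof (intro conjI allI)
  show "hermitian R"
    using assms by (simp add: pd_def)
  show "0 \<le> Re (qf x R)" for x
    using assms by (cases "x = 0") (auto simp: pd_def qf_eq_double_sum less_imp_le)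
qed

lemma psd_mat_1: "psd (mat 1 :: complex^'n^'n)"
  by (simp add: psd_def hermitian_mat_1 qf_mat_1)

lemma scalar_matrix_loewner_leI:
  assumes "hermitian H" and "\<And>x. c * (norm x)\<^sup>2 \<le> Re (qf x H)"
  shows "loewner_le (cscale (of_real c) (mat 1)) H"
  unfolding loewner_le_def psd_def
  using assms by (simp add: hermitian_diff hermitian_cscale_of_real hermitian_mat_1
      qf_diff Re_qf_scalar_matrix)

lemma loewner_le_scalar_matrixI:
  assumes "hermitian H" and "\<And>x. Re (qf x H) \<le> c * (norm x)\<^sup>2"
  shows "loewner_le H (cscale (of_real c) (mat 1))"
  unfolding loewner_le_def psd_def
  using assms by (simp add: hermitian_diff hermitian_cscale_of_real hermitian_mat_1
      qf_diff Re_qf_scalar_matrix)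

lemma norm_axis_1: "norm (axis j (1::complex) :: complex^'n) = 1"
proof -
  have "(\<Sum>i\<in>UNIV. (norm (axis j (1::complex) $ i :: complex))\<^sup>2) = (\<Sum>i\<in>(UNIV::'n set). if i = j then 1 else 0)"
    by (rule sum.cong) (auto simp: axis_def)
  then show ?thesis unfolding norm_vec_def L2_set_def by simp
qed

lemma matrix_vector_mult_axis: "(R *v axis j t)$k = R$k$j * t"
proof -
  have "(R *v axis j t)$k = (\<Sum>l\<in>UNIV. R$k$l * axis j t $ l)"
    by (simp add: matrix_vector_mult_def)
  also have "\<dots> = (\<Sum>l\<in>UNIV. if l = j then R$k$j * t else 0)"
    by (rule sum.cong) (auto simp: axis_def)
  finally show ?thesis by simp
qed

lemma vinner_axis_left: "vinner (axis i c) y = cnj c * y$i"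
proof -
  have "vinner (axis i c) y = (\<Sum>k\<in>UNIV. if k = i then cnj c * y$i else 0)"
    unfolding vinner_def by (rule sum.cong) (auto simp: axis_def)
  then show ?thesis by simp
qed

lemma vinner_add_left: "vinner (u + v) w = vinner u w + vinner v w"
  by (simp add: vinner_def algebra_simps sum.distrib)

lemma vinner_add_right: "vinner u (v + w) = vinner u v + vinner u w"
  by (simp add: vinner_def algebra_simps sum.distrib)

lemma qf_axis: "qf (axis i c) R = cnj c * R$i$i * c"
  by (simp add: qf_eq_vinner vinner_axis_left matrix_vector_mult_axis mult.assoc)

lemma Re_mtrace_le_if_loewner_le_scalar_matrix:
  fixes H :: "complex^'n^'n"
  assumes "loewner_le H (cscale (of_real c) (mat 1))"
  shows "Re (mtrace H) \<le> real CARD('n) * c"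
proof -
  have diag: "Re (H$i$i) \<le> c" for i
  proof -
    have "0 \<le> Re (qf (axis i 1) (cscale (of_real c) (mat 1) - H))"
      using assms unfolding loewner_le_def by (rule psd_Re_qf_nonneg)
    then show ?thesis by (simp add: qf_diff Re_qf_scalar_matrix norm_axis_1 qf_axis cscale_def mat_def)
  qed
  have "(\<Sum>i\<in>UNIV. Re (H$i$i)) \<le> (\<Sum>i\<in>(UNIV::'n set). c)"
    by (intro sum_mono diag)
  then show ?thesis by (simp add: mtrace_def)
qed

lemma psd_diag:
  assumes "psd R"
  shows "0 \<le> Re (R$i$i)" and "Im (R$i$i) = 0"
  using psd_Re_qf_nonneg[OF assms, of "axis i 1"] hermitian_Im_qf[of R "axis i 1"] assms
  by (simp_all add: qf_axis psd_def)

text \<open>Testing with \<open>e\<^sub>i - cnj (R\<^sub>i\<^sub>j) e\<^sub>j\<close> gives \<open>-2 |R\<^sub>i\<^sub>j|\<^sup>2 \<ge> 0\<close>.\<close>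

lemma psd_eq_0_if_diag_eq_0:
  assumes p: "psd R" and diag: "\<And>i. R$i$i = 0"
  shows "R = 0"
proof -
  have "R$i$j = 0" for i j
  proof (cases "i = j")
    case True
    then show ?thesis using diag by simp
  next
    case False
    define a where "a = R$i$j"
    define t where "t = - cnj a"
    have "adj R $ j $ i = R $ j $ i" using p unfolding psd_def hermitian_def by simp
    then have Rji: "R$j$i = cnj a" unfolding a_def by (simp add: adj_def)
    have "qf (axis i 1 + axis j t) R = R$i$j * t + cnj t * R$j$i"
      unfolding qf_eq_vinner
      by (simp add: matrix_vector_right_distrib vinner_add_left vinner_add_right
          vinner_axis_left matrix_vector_mult_axis diag)
    then have "Re (qf (axis i 1 + axis j t) R) = - 2 * ((Re a)\<^sup>2 + (Im a)\<^sup>2)"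
      by (simp add: t_def Rji flip: a_def) (simp add: power2_eq_square)
    then have "(Re a)\<^sup>2 + (Im a)\<^sup>2 \<le> 0"
      using psd_Re_qf_nonneg[OF p, of "axis i 1 + axis j t"] by simp
    then show ?thesis unfolding a_def by (simp add: sum_power2_le_zero_iff complex_eq_iff)
  qed
  then show ?thesis by (simp add: vec_eq_iff)
qed

lemma norm_qf_le: "cmod (qf x H) \<le> (\<Sum>i\<in>UNIV. \<Sum>j\<in>UNIV. cmod (H$i$j)) * (norm x)\<^sup>2"
proof -
  have "cmod (qf x H) \<le> (\<Sum>i\<in>UNIV. \<Sum>j\<in>UNIV. cmod (cnj (x$i) * H$i$j * x$j))"
    unfolding qf_eq_double_sum by (rule order_trans[OF norm_sum sum_mono[OF norm_sum]])
  also have "\<dots> \<le> (\<Sum>i\<in>UNIV. \<Sum>j\<in>UNIV. cmod (H$i$j) * (norm x)\<^sup>2)"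
  proof (intro sum_mono)
    fix i j
    have "cmod (cnj (x$i) * H$i$j * x$j) = cmod (H$i$j) * (cmod (x$i) * cmod (x$j))"
      by (simp add: norm_mult)
    also have "\<dots> \<le> cmod (H$i$j) * (norm x * norm x)"
      by (intro mult_left_mono mult_mono) (auto simp: Finite_Cartesian_Product.norm_nth_le)
    finally show "cmod (cnj (x$i) * H$i$j * x$j) \<le> cmod (H$i$j) * (norm x)\<^sup>2"
      by (simp add: power2_eq_square)
  qed
  also have "\<dots> = (\<Sum>i\<in>UNIV. \<Sum>j\<in>UNIV. cmod (H$i$j)) * (norm x)\<^sup>2"
    by (simp add: sum_distrib_right)
  finally show ?thesis .
qed

lemma hermitian_plus_scalar_matrix_psd:
  assumes "hermitian H"
  obtains c where "psd (H + cscale (of_real c) (mat 1))"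
proof
  let ?c = "\<Sum>i\<in>UNIV. \<Sum>j\<in>UNIV. cmod (H$i$j)"
  show "psd (H + cscale (of_real ?c) (mat 1))"
    unfolding psd_def
  proof (intro conjI allI)
    show "hermitian (H + cscale (of_real ?c) (mat 1))"
      by (intro hermitian_add hermitian_cscale_of_real assms hermitian_mat_1)
    fix x
    have "- Re (qf x H) \<le> ?c * (norm x)\<^sup>2"
      using abs_Re_le_cmod[of "qf x H"] norm_qf_le[of x H] by linarith
    then show "0 \<le> Re (qf x (H + cscale (of_real ?c) (mat 1)))"
      by (simp only: qf_add plus_complex.sel Re_qf_scalar_matrix)
  qed
qed

lemma scaleR_eq_cscale: "r *\<^sub>R R = cscale (of_real r) R"
  unfolding cscale_def vec_eq_iff
  by (simp only: vector_scaleR_component vec_lambda_beta) (simp add: scaleR_conv_of_real)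

section \<open>The operator norm\<close>

lemma norm_matrix_vector_mult_le: "norm (R *v x) \<le> opnorm2 R * norm x"
  unfolding opnorm2_def by (rule onorm[OF matrix_vector_mul_bounded_linear])

lemma opnorm2_nonneg: "0 \<le> opnorm2 R"
  unfolding opnorm2_def by (rule onorm_pos_le[OF matrix_vector_mul_bounded_linear])

lemma opnorm2_leI: "(\<And>x. norm (R *v x) \<le> b * norm x) \<Longrightarrow> opnorm2 (R::complex^'n^'n) \<le> b"
  unfolding opnorm2_def by (rule onorm_le)

lemma opnorm2_zero: "opnorm2 (0::complex^'n^'n) = 0"
proof -
  have "(\<lambda>x. (0::complex^'n^'n) *v x) = (\<lambda>x. 0)"
    by (simp add: fun_eq_iff vec_eq_iff matrix_vector_mult_def)
  then show ?thesis unfolding opnorm2_def by (simp only: onorm_zero)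
qed

lemma opnorm2_uminus: "opnorm2 (- R) = opnorm2 (R::complex^'n^'n)"
proof -
  have "(\<lambda>x. (- R) *v x) = (\<lambda>x. - (R *v x))"
    by (simp add: fun_eq_iff vec_eq_iff matrix_vector_mult_def sum_negf)
  then show ?thesis unfolding opnorm2_def by (simp add: onorm_neg)
qed

lemma opnorm2_add_le: "opnorm2 (R + T) \<le> opnorm2 R + opnorm2 (T::complex^'n^'n)"
  unfolding opnorm2_def matrix_vector_mult_add_rdistrib
  by (rule onorm_triangle) simp_all

lemma opnorm2_diff_le: "opnorm2 (R - T) \<le> opnorm2 R + opnorm2 (T::complex^'n^'n)"
  using opnorm2_add_le[of R "- T"] by (simp add: opnorm2_uminus)

lemma opnorm2_scaleR: "opnorm2 (r *\<^sub>R R) = \<bar>r\<bar> * opnorm2 (R::complex^'n^'n)"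
proof -
  have "(\<lambda>x. (r *\<^sub>R R) *v x) = (\<lambda>x. r *\<^sub>R (R *v x))"
    by (simp add: fun_eq_iff vec_eq_iff matrix_vector_mult_def scaleR_sum_right)
  then show ?thesis unfolding opnorm2_def by (simp add: onorm_scaleR)
qed

lemma opnorm2_scalar_matrix_le: "opnorm2 (cscale z (mat 1) :: complex^'n^'n) \<le> cmod z"
proof (rule opnorm2_leI)
  fix x :: "complex^'n"
  have "(\<Sum>j\<in>UNIV. z * (if i = j then 1 else 0) * x$j) = z * x$i" for i
  proof -
    have "(\<Sum>j\<in>UNIV. z * (if i = j then 1 else 0) * x$j) = (\<Sum>j\<in>UNIV. if i = j then z * x$j else 0)"
      by (rule sum.cong) auto
    then show ?thesis by simp
  qed
  then have "cscale z (mat 1) *v x = (\<chi> i. z * x$i)"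
    unfolding vec_eq_iff matrix_vector_mult_def cscale_def mat_def by simp
  then show "norm (cscale z (mat 1) *v x) \<le> cmod z * norm x"
    by (simp add: norm_vec_def norm_mult L2_set_right_distrib)
qed

lemma norm_nth_nth_le_opnorm2: "norm (R$i$j) \<le> opnorm2 (R::complex^'n^'n)"
proof -
  have "(R *v axis j 1)$i = R$i$j"
    by (simp add: matrix_vector_mult_axis)
  then have "norm (R$i$j) \<le> norm (R *v axis j 1)"
    by (metis Finite_Cartesian_Product.norm_nth_le)
  also have "\<dots> \<le> opnorm2 R"
    using norm_matrix_vector_mult_le[of R "axis j 1"] by (simp add: norm_axis_1)
  finally show ?thesis .
qed

lemma norm_le_sum_norm_nth: "norm (x::'a::real_normed_vector^'n) \<le> (\<Sum>i\<in>UNIV. norm (x$i))"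
  unfolding norm_vec_def by (rule L2_set_le_sum) simp

lemma norm_le_opnorm2: "norm (R::complex^'n^'n) \<le> real CARD('n) * real CARD('n) * opnorm2 R"
proof -
  have "norm R \<le> (\<Sum>i\<in>UNIV. \<Sum>j\<in>UNIV. norm (R$i$j))"
    by (intro order_trans[OF norm_le_sum_norm_nth] sum_mono norm_le_sum_norm_nth)
  also have "\<dots> \<le> (\<Sum>i\<in>(UNIV::'n set). \<Sum>j\<in>(UNIV::'n set). opnorm2 R)"
    by (intro sum_mono norm_nth_nth_le_opnorm2)
  finally show ?thesis by simp
qed

lemma opnorm2_le_norm: "opnorm2 (R::complex^'n^'n) \<le> real CARD('n) * real CARD('n) * norm R"
proof (rule opnorm2_leI)
  fix x
  have "norm (R$i$j) \<le> norm R" for i j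
    using Finite_Cartesian_Product.norm_nth_le[of "R$i" j] Finite_Cartesian_Product.norm_nth_le[of R i]
    by linarith
  then have "norm (R$i$j * x$j) \<le> norm R * norm x" for i j
    by (simp add: norm_mult mult_mono Finite_Cartesian_Product.norm_nth_le)
  then have "norm ((R *v x)$i) \<le> (\<Sum>j\<in>(UNIV::'n set). norm R * norm x)" for i
    unfolding matrix_vector_mult_def vec_lambda_beta by (rule order_trans[OF norm_sum sum_mono])
  then have "norm (R *v x) \<le> (\<Sum>i\<in>(UNIV::'n set). \<Sum>j\<in>(UNIV::'n set). norm R * norm x)"
    by (intro order_trans[OF norm_le_sum_norm_nth] sum_mono)
  then show "norm (R *v x) \<le> real CARD('n) * real CARD('n) * norm R * norm x"
    by simp
qed

section \<open>Positivity preserving maps\<close>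

locale psd_preserving_map =
  fixes S :: "complex^'n^'n \<Rightarrow> complex^'n^'n"
  assumes add: "S (R + T) = S R + S T"
    and cscale: "S (cscale c R) = cscale c (S R)"
    and psd: "psd R \<Longrightarrow> psd (S R)"
begin

lemma linear: "linear S"
  by (rule linearI) (simp_all add: add scaleR_eq_cscale cscale)

lemma zero: "S 0 = 0"
  by (rule linear_0[OF linear])

lemma diff: "S (R - T) = S R - S T"
  by (rule linear_diff[OF linear])

lemma hermitian: assumes "hermitian H" shows "hermitian (S H)"
proof -
  obtain c where c: "psd (H + cscale (of_real c) (mat 1))"
    using hermitian_plus_scalar_matrix_psd[OF assms] by blast
  have "S H = S (H + cscale (of_real c) (mat 1)) - cscale (of_real c) (S (mat 1))"
    by (simp add: add cscale)
  moreover have "hermitian (S (H + cscale (of_real c) (mat 1)) - cscale (of_real c) (S (mat 1)))"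
    using psd[OF c] psd[OF psd_mat_1] unfolding psd_def
    by (intro hermitian_diff hermitian_cscale_of_real) auto
  ultimately show ?thesis by simp
qed

lemma adj: "S (adj R) = adj (S R)"
proof -
  define H where "H = cscale (1/2) (R + adj R)"
  have H: "hermitian H" unfolding H_def hermitian_def
    by (simp add: adj_def cscale_def vec_eq_iff)
  have R: "R = H + cscale \<i> (ImM R)"
    unfolding H_def ImM_def by (simp add: cscale_def vec_eq_iff field_simps)
  have adj_R: "adj R = H + cscale (- \<i>) (ImM R)"
    unfolding H_def ImM_def by (simp add: adj_def cscale_def vec_eq_iff field_simps)
  show ?thesis
    using hermitian[OF H] hermitian[OF hermitian_ImM, of R]
    by (subst (2) R, subst adj_R) (simp add: add cscale adj_add adj_cscale hermitian_def)
qed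

lemma ImM: "S (ImM R) = ImM (S R)"
  unfolding ImM_def by (simp add: cscale diff adj)

lemma bdd_above_opnorm2_unit_ball: "bdd_above ((\<lambda>R. opnorm2 (S R)) ` {R. opnorm2 R \<le> 1})"
proof -
  let ?C = "real CARD('n) * real CARD('n)"
  obtain K where K: "\<And>R. norm (S R) \<le> norm R * K" "0 < K"
    using bounded_linear.pos_bounded[OF linear[THEN linear_conv_bounded_linear[THEN iffD1]]] by blast
  have "opnorm2 (S R) \<le> ?C * (?C * K)" if "opnorm2 R \<le> 1" for R
  proof -
    have "?C * opnorm2 R \<le> ?C"
      using that by (simp add: mult_left_le)
    then have "norm R \<le> ?C"
      using norm_le_opnorm2[of R] by linarith
    then have "norm R * K \<le> ?C * K"
      using K(2) by (simp add: mult_right_mono)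
    have "opnorm2 (S R) \<le> ?C * norm (S R)"
      by (rule opnorm2_le_norm)
    also have "\<dots> \<le> ?C * (?C * K)"
      using K(1)[of R] \<open>norm R * K \<le> ?C * K\<close> by (intro mult_left_mono) simp_all
    finally show ?thesis .
  qed
  then show ?thesis
    by (intro bdd_aboveI2[where M = "?C * (?C * K)"]) simp
qed

lemma opnorm2_le: "opnorm2 (S R) \<le> opnorm_S S * opnorm2 R"
proof (cases "R = 0")
  case True
  then show ?thesis by (simp add: zero opnorm2_zero)
next
  case False
  define r where "r = opnorm2 R"
  have r: "0 < r"
    using False norm_le_opnorm2[of R] opnorm2_nonneg[of R] unfolding r_def
    by (metis less_eq_real_def mult_zero_right norm_le_zero_iff)
  have "opnorm2 (S ((1/r) *\<^sub>R R)) \<le> opnorm_S S"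
    unfolding opnorm_S_def using r
    by (intro cSUP_upper bdd_above_opnorm2_unit_ball) (simp add: opnorm2_scaleR r_def)
  then have "opnorm2 (S R) / r \<le> opnorm_S S"
    using r by (simp add: linear_scale[OF linear] opnorm2_scaleR)
  then show ?thesis using r by (simp add: r_def field_simps)
qed

end

lemma data_pair_psd_preserving_map: "data_pair A S \<Longrightarrow> psd_preserving_map S"
  unfolding data_pair_def by unfold_locales auto

section \<open>The scalar measures of a positive semidefinite matrix measure\<close>

lemma emeasure_measure_of_borel:
  fixes g :: "real set \<Rightarrow> real"
  assumes "g {} = 0" and "\<And>B. B \<in> sets borel \<Longrightarrow> 0 \<le> g B"
    and "\<And>F. range F \<subseteq> sets borel \<Longrightarrow> disjoint_family F \<Longrightarrow> (\<lambda>k. g (F k)) sums g (\<Union>k. F k)"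
    and "B \<in> sets borel"
  shows "emeasure (measure_of UNIV (sets borel) (\<lambda>B. ennreal (g B))) B = ennreal (g B)"
proof (rule emeasure_measure_of_sigma)
  show "sigma_algebra UNIV (sets borel)"
    using sets.sigma_algebra_axioms[of borel] by simp
  show "positive (sets borel) (\<lambda>B. ennreal (g B))"
    unfolding positive_def using assms(1) by simp
  show "countably_additive (sets borel) (\<lambda>B. ennreal (g B))"
    unfolding countably_additive_def
  proof (intro allI impI)
    fix F :: "nat \<Rightarrow> real set"
    assume F: "range F \<subseteq> sets borel" "disjoint_family F"
    then have s: "(\<lambda>k. g (F k)) sums g (\<Union>k. F k)" by (rule assms(3))
    then have "(\<Sum>i. ennreal (g (F i))) = ennreal (\<Sum>i. g (F i))"
      using F assms(2) by (intro suminf_ennreal2) (auto simp: sums_iff)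
    then show "(\<Sum>i. ennreal (g (F i))) = ennreal (g (\<Union>k. F k))"
      using s by (simp add: sums_iff)
  qed
qed (fact assms(4))

lemma sets_measure_of_borel: "sets (measure_of UNIV (sets borel) f) = (sets borel :: real set set)"
  by (metis sets_measure_of sets.space_closed sets.sigma_sets_eq space_borel)

lemma space_measure_of_borel: "space (measure_of UNIV (sets borel) f) = (UNIV :: real set)"
  by (simp add: space_measure_of_conv)

lemma sets_qmeasure: "sets (qmeasure V x) = sets borel"
  unfolding qmeasure_def by (rule sets_measure_of_borel)

lemma space_qmeasure: "space (qmeasure V x) = UNIV"
  unfolding qmeasure_def by (rule space_measure_of_borel)

lemma bounded_linear_Re_qf: "bounded_linear (\<lambda>R::complex^'n^'n. Re (qf x R))"
  by (rule linear_conv_bounded_linear[THEN iffD1], rule linearI)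
    (simp_all add: qf_add scaleR_eq_cscale qf_cscale)

lemma bounded_linear_Re_mtrace: "bounded_linear (\<lambda>R::complex^'n^'n. Re (mtrace R) / real CARD('n))"
  by (rule linear_conv_bounded_linear[THEN iffD1], rule linearI)
    (simp_all add: mtrace_def scaleR_eq_cscale cscale_def sum.distrib add_divide_distrib
      flip: sum_distrib_left)

context
  fixes V :: "real set \<Rightarrow> complex^'n^'n"
  assumes V: "psd_matrix_measure V"
begin

lemma emeasure_qmeasure:
  "B \<in> sets borel \<Longrightarrow> emeasure (qmeasure V x) B = ennreal (Re (qf x (V B)))"
  unfolding qmeasure_def
proof (rule emeasure_measure_of_borel)
  show "Re (qf x (V {})) = 0"
    using V by (simp add: psd_matrix_measure_def qf_zero)
  show "0 \<le> Re (qf x (V B))" if "B \<in> sets borel" for B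
    using V that by (simp add: psd_matrix_measure_def psd_Re_qf_nonneg)
  show "(\<lambda>k. Re (qf x (V (F k)))) sums Re (qf x (V (\<Union>k. F k)))"
    if "range F \<subseteq> sets borel" "disjoint_family F" for F
    using V that by (intro bounded_linear.sums[OF bounded_linear_Re_qf]) (simp add: psd_matrix_measure_def)
qed

lemma emeasure_dos:
  "B \<in> sets borel \<Longrightarrow> emeasure (dos V) B = ennreal (Re (mtrace (V B)) / real CARD('n))"
  unfolding dos_def
proof (rule emeasure_measure_of_borel)
  show "Re (mtrace (V {})) / real CARD('n) = 0"
    using V by (simp add: psd_matrix_measure_def mtrace_def)
  show "0 \<le> Re (mtrace (V B)) / real CARD('n)" if "B \<in> sets borel" for B
    using V that psd_diag(1)
    by (auto simp: psd_matrix_measure_def mtrace_def intro!: divide_nonneg_nonneg sum_nonneg)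
  show "(\<lambda>k. Re (mtrace (V (F k))) / real CARD('n)) sums (Re (mtrace (V (\<Union>k. F k))) / real CARD('n))"
    if "range F \<subseteq> sets borel" "disjoint_family F" for F
    using V that by (intro bounded_linear.sums[OF bounded_linear_Re_mtrace]) (simp add: psd_matrix_measure_def)
qed

text \<open>The measures \<open>qmeasure V x\<close> are absolutely continuous with respect to \<open>dos V\<close>,
  because a positive semidefinite matrix of zero trace vanishes.\<close>

lemma emeasure_qmeasure_eq_0_if_dos:
  assumes B: "B \<in> sets borel" and "emeasure (dos V) B = 0"
  shows "emeasure (qmeasure V x) B = 0"
proof -
  have p: "psd (V B)" using V B by (simp add: psd_matrix_measure_def)
  have "(\<Sum>i\<in>UNIV. Re (V B $ i $ i)) \<le> 0"
    using assms emeasure_dos[OF B] by (simp add: mtrace_def ennreal_eq_0_iff divide_le_0_iff)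
  moreover have "Re (V B $ i $ i) \<le> (\<Sum>i\<in>UNIV. Re (V B $ i $ i))" for i
    by (rule member_le_sum) (simp_all add: psd_diag(1)[OF p])
  ultimately have "Re (V B $ i $ i) = 0" for i
    using psd_diag(1)[OF p, of i] by (meson order.antisym order.trans)
  then have "V B = 0"
    using psd_diag(2)[OF p] by (intro psd_eq_0_if_diag_eq_0[OF p]) (simp add: complex_eq_iff)
  then show ?thesis using emeasure_qmeasure[OF B] by (simp add: qf_zero)
qed

lemma AE_qmeasure_msupp: "AE \<tau> in qmeasure V x. \<tau> \<in> msupp (dos V)"
proof -
  define F where "F = {ball \<tau> e | \<tau> e. 0 < e \<and> emeasure (dos V) (ball \<tau> e) = 0}"
  obtain F' where F': "F' \<subseteq> F" "countable F'" "\<Union>F' = \<Union>F"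
    using Lindelof[of F] unfolding F_def by auto
  have "(\<Union>S\<in>F'. S) \<in> null_sets (qmeasure V x)"
  proof (rule null_sets_UN'[OF F'(2)])
    fix S assume "S \<in> F'"
    then obtain \<tau> e where "S = ball \<tau> e" "emeasure (dos V) (ball \<tau> e) = 0"
      using F'(1) unfolding F_def by auto
    then show "S \<in> null_sets (qmeasure V x)"
      using emeasure_qmeasure_eq_0_if_dos[of S] by (auto simp: null_sets_def sets_qmeasure)
  qed
  moreover have "UNIV - msupp (dos V) \<subseteq> \<Union>F"
  proof
    fix \<tau> assume "\<tau> \<in> UNIV - msupp (dos V)"
    then obtain e where e: "0 < e" "\<not> emeasure (dos V) (ball \<tau> e) > 0"
      unfolding msupp_def by auto
    then have "ball \<tau> e \<in> F"
      unfolding F_def by auto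
    then show "\<tau> \<in> \<Union>F"
      by (rule UnionI) (simp add: e(1))
  qed
  ultimately show ?thesis
    using F'(3) by (intro AE_I') (auto simp: space_qmeasure)
qed

end

lemma Im_inverse_of_real_minus_le:
  assumes "0 < Im z" and "0 < d" and "d \<le> dist z (of_real \<tau>)"
  shows "Im (1 / (of_real \<tau> - z)) \<le> Im z / d\<^sup>2"
proof -
  have "d\<^sup>2 \<le> (dist z (of_real \<tau>))\<^sup>2"
    using assms by (intro power_mono) auto
  also have "\<dots> = (Re z - \<tau>)\<^sup>2 + (Im z)\<^sup>2"
    by (simp add: dist_complex_def cmod_def)
  moreover have "0 < ((Re z - \<tau>)\<^sup>2 + (Im z)\<^sup>2) * d\<^sup>2"
    using assms by (intro mult_pos_pos add_nonneg_pos) auto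
  ultimately have "Im z / ((Re z - \<tau>)\<^sup>2 + (Im z)\<^sup>2) \<le> Im z / d\<^sup>2"
    using assms by (intro divide_left_mono) auto
  then show ?thesis
    by (simp add: Im_divide power2_eq_square algebra_simps)
qed

context
  fixes V :: "real set \<Rightarrow> complex^'n^'n"
  assumes V: "psd_matrix_measure V" and V_UNIV: "V UNIV = mat 1"
begin

lemma emeasure_qmeasure_UNIV: "emeasure (qmeasure V x) UNIV = ennreal ((norm x)\<^sup>2)"
  using emeasure_qmeasure[OF V, of UNIV x] by (simp add: V_UNIV qf_mat_1)

lemma finite_measure_qmeasure: "finite_measure (qmeasure V x)"
  by (rule finite_measureI) (simp add: space_qmeasure emeasure_qmeasure_UNIV)

lemma msupp_dos_nonempty: "msupp (dos V) \<noteq> {}"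
proof
  assume "msupp (dos V) = {}"
  then have "AE \<tau> in qmeasure V (axis undefined 1). False"
    using AE_qmeasure_msupp[OF V] by simp
  then have "emeasure (qmeasure V (axis undefined 1)) UNIV = 0"
    using ae_filter_eq_bot_iff trivial_limit_def space_qmeasure by metis
  then show False by (simp add: emeasure_qmeasure_UNIV norm_axis_1)
qed

lemma Im_le_d_rho: "Im z \<le> d_rho (dos V) z"
proof -
  have ne: "complex_of_real ` msupp (dos V) \<noteq> {}"
    using msupp_dos_nonempty by simp
  have "Im z \<le> dist z w" if "w \<in> complex_of_real ` msupp (dos V)" for w
    using that abs_Im_le_cmod[of "z - w"] by (auto simp: dist_complex_def)
  then show ?thesis
    unfolding d_rho_def infdist_notempty[OF ne] by (intro cINF_greatest[OF ne])
qed

lemma d_rho_pos: "0 < Im z \<Longrightarrow> 0 < d_rho (dos V) z"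
  using Im_le_d_rho[of z] by linarith

lemma integrable_qmeasure_resolvent:
  assumes "0 < Im z"
  shows "integrable (qmeasure V x) (\<lambda>\<tau>. 1 / (complex_of_real \<tau> - z))"
proof -
  interpret finite_measure "qmeasure V x"
    by (rule finite_measure_qmeasure)
  have "complex_of_real \<tau> - z \<noteq> 0" for \<tau>
    using assms by (auto simp: complex_eq_iff)
  then have "(\<lambda>\<tau>. 1 / (complex_of_real \<tau> - z)) \<in> borel_measurable borel"
    by (intro borel_measurable_continuous_onI continuous_intros) auto
  moreover have "norm (1 / (complex_of_real \<tau> - z)) \<le> 1 / Im z" for \<tau>
    using assms abs_Im_le_cmod[of "complex_of_real \<tau> - z"] by (simp add: norm_divide frac_le)
  ultimately show ?thesis
    by (intro integrable_const_bound[where B = "1 / Im z"])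
      (auto simp: measurable_cong_sets[OF sets_qmeasure refl])
qed

lemma Im_integral_stieltjes_le:
  assumes z: "0 < Im z"
  shows "Im (LINT \<tau>|qmeasure V x. 1 / (complex_of_real \<tau> - z))
           \<le> Im z / (d_rho (dos V) z)\<^sup>2 * (norm x)\<^sup>2"
proof -
  let ?\<mu> = "qmeasure V x" and ?d = "d_rho (dos V) z"
  let ?f = "\<lambda>\<tau>::real. 1 / (complex_of_real \<tau> - z)"
  interpret finite_measure ?\<mu>
    by (rule finite_measure_qmeasure)
  have d: "0 < ?d"
    by (rule d_rho_pos[OF z])
  have int: "integrable ?\<mu> ?f"
    by (rule integrable_qmeasure_resolvent[OF z])
  have "Im (LINT \<tau>|?\<mu>. ?f \<tau>) = (LINT \<tau>|?\<mu>. Im (?f \<tau>))"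
    by (rule integral_Im[OF int, symmetric])
  also have "\<dots> \<le> (LINT \<tau>|?\<mu>. Im z / ?d\<^sup>2)"
  proof (rule integral_mono_AE)
    show "AE \<tau> in ?\<mu>. Im (?f \<tau>) \<le> Im z / ?d\<^sup>2"
      using AE_qmeasure_msupp[OF V]
    proof eventually_elim
      case (elim \<tau>)
      then have "?d \<le> dist z (complex_of_real \<tau>)"
        unfolding d_rho_def by (intro infdist_le) auto
      then show ?case by (rule Im_inverse_of_real_minus_le[OF z d])
    qed
  qed (use int in auto)
  also have "\<dots> = Im z / ?d\<^sup>2 * (norm x)\<^sup>2"
    using emeasure_qmeasure_UNIV[of x] by (simp add: space_qmeasure measure_def)
  finally show ?thesis .
qed

end

section \<open>Bounds on the solution of the matrix Dyson equation\<close>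

lemma matrix_inv_left:
  assumes "invertible (R::complex^'n^'n)"
  shows "matrix_inv R ** R = mat 1"
  using someI_ex[OF assms[unfolded invertible_def]] unfolding matrix_inv_def by blast

locale MDE_solution =
  fixes A :: "complex^'n^'n"
    and S :: "complex^'n^'n \<Rightarrow> complex^'n^'n"
    and M :: "complex \<Rightarrow> complex^'n^'n"
    and V :: "real set \<Rightarrow> complex^'n^'n"
  assumes data_pair: "data_pair A S"
    and solves_MDE: "solves_MDE A S M"
    and V: "psd_matrix_measure V" and V_UNIV: "V UNIV = mat 1"
    and stieltjes_rep: "stieltjes_rep V M"
begin

interpretation S: psd_preserving_map S
  using data_pair by (rule data_pair_psd_preserving_map)

lemma invertible_M: "0 < Im z \<Longrightarrow> invertible (M z)"
  and MDE: "0 < Im z \<Longrightarrow> - matrix_inv (M z) = cscale z (mat 1) - A + S (M z)"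
  and pd_ImM: "0 < Im z \<Longrightarrow> pd (ImM (M z))"
  using solves_MDE by (auto simp: solves_MDE_def)

lemma Im_qf_M_lower:
  assumes z: "0 < Im z"
  shows "Im z * (norm (M z *v x))\<^sup>2 \<le> Re (qf x (ImM (M z)))"
proof -
  define y where "y = M z *v x"
  have "adj (M z) ** adj (matrix_inv (M z)) ** M z = M z"
    by (simp flip: adj_matrix_mult add: matrix_inv_left[OF invertible_M[OF z]] adj_mat_1)
  then have "qf x (M z) = cnj (qf y (matrix_inv (M z)))"
    unfolding y_def by (metis qf_adj_sandwich qf_adj)
  then have "Re (qf x (ImM (M z))) = Im (qf y (- matrix_inv (M z)))"
    by (simp add: qf_ImM qf_uminus)
  also have "\<dots> = Im z * (norm y)\<^sup>2 - Im (qf y A) + Im (qf y (S (M z)))"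
    by (simp add: MDE[OF z] qf_add qf_diff qf_cscale qf_mat_1)
  finally have Im_M: "Re (qf x (ImM (M z))) = Im z * (norm y)\<^sup>2 - Im (qf y A) + Im (qf y (S (M z)))" .
  have "0 \<le> Re (qf y (0 - ImM A))"
    using data_pair unfolding data_pair_def loewner_le_def by (blast intro: psd_Re_qf_nonneg)
  then have "Im (qf y A) \<le> 0"
    by (simp add: qf_uminus qf_ImM)
  moreover have "0 \<le> Re (qf y (S (ImM (M z))))"
    using pd_ImM[OF z] by (intro psd_Re_qf_nonneg S.psd pd_imp_psd)
  then have "0 \<le> Im (qf y (S (M z)))"
    by (simp add: S.ImM qf_ImM)
  ultimately show ?thesis
    using Im_M unfolding y_def by linarith
qed

lemma Im_qf_M_upper:
  assumes "0 < Im z"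
  shows "Re (qf x (ImM (M z))) \<le> Im z / (d_rho (dos V) z)\<^sup>2 * (norm x)\<^sup>2"
  using Im_integral_stieltjes_le[OF V V_UNIV assms, of x] stieltjes_rep assms
  by (simp add: stieltjes_rep_def qf_ImM)

lemma opnorm2_M_le:
  assumes z: "0 < Im z"
  shows "opnorm2 (M z) \<le> 1 / d_rho (dos V) z"
proof (rule opnorm2_leI)
  fix x
  let ?d = "d_rho (dos V) z"
  have d: "0 < ?d"
    by (rule d_rho_pos[OF V V_UNIV z])
  have "Im z * (norm (M z *v x))\<^sup>2 \<le> Im z * (norm x / ?d)\<^sup>2"
    using Im_qf_M_lower[OF z, of x] Im_qf_M_upper[OF z, of x] by (simp add: power_divide)
  then have "(norm (M z *v x))\<^sup>2 \<le> (norm x / ?d)\<^sup>2" using z by simp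
  then have "norm (M z *v x) \<le> norm x / ?d"
    by (rule power2_le_imp_le) (use d in simp)
  then show "norm (M z *v x) \<le> 1 / ?d * norm x"
    by simp
qed

lemma ImM_M_lower:
  assumes z: "0 < Im z"
  shows "loewner_le (cscale (complex_of_real (Im z / (opnorm2 (matrix_inv (M z)))\<^sup>2)) (mat 1))
           (ImM (M z))"
proof (rule scalar_matrix_loewner_leI[OF hermitian_ImM])
  fix x
  let ?N = "opnorm2 (matrix_inv (M z))"
  have "norm x \<le> ?N * norm (M z *v x)"
    using norm_matrix_vector_mult_le[of "matrix_inv (M z)" "M z *v x"]
    by (simp add: matrix_vector_mul_assoc matrix_inv_left[OF invertible_M[OF z]])
  then have "(norm x)\<^sup>2 \<le> (?N * norm (M z *v x))\<^sup>2"
    by (intro power_mono) auto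
  then have "(norm x)\<^sup>2 / ?N\<^sup>2 \<le> (norm (M z *v x))\<^sup>2"
    by (cases "?N = 0") (simp_all add: power_mult_distrib divide_le_eq mult.commute)
  then have "Im z * ((norm x)\<^sup>2 / ?N\<^sup>2) \<le> Im z * (norm (M z *v x))\<^sup>2"
    using z by (intro mult_left_mono) auto
  then show "Im z / ?N\<^sup>2 * (norm x)\<^sup>2 \<le> Re (qf x (ImM (M z)))"
    by (intro order_trans[OF _ Im_qf_M_lower[OF z]]) simp
qed

lemma ImM_M_upper:
  "0 < Im z \<Longrightarrow> loewner_le (ImM (M z))
     (cscale (complex_of_real (Im z / (d_rho (dos V) z)\<^sup>2)) (mat 1))"
  by (rule loewner_le_scalar_matrixI[OF hermitian_ImM Im_qf_M_upper])

lemma opnorm2_inv_M_le: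
  assumes z: "0 < Im z"
  shows "opnorm2 (matrix_inv (M z)) \<le> cmod z + opnorm2 A + opnorm_S S * opnorm2 (M z)"
proof -
  have "opnorm2 (matrix_inv (M z)) = opnorm2 (cscale z (mat 1) - A + S (M z))"
    by (metis MDE[OF z] opnorm2_uminus)
  also have "\<dots> \<le> opnorm2 (cscale z (mat 1) :: complex^'n^'n) + opnorm2 A + opnorm2 (S (M z))"
    by (rule order_trans[OF opnorm2_add_le add_right_mono[OF opnorm2_diff_le]])
  also have "\<dots> \<le> cmod z + opnorm2 A + opnorm_S S * opnorm2 (M z)"
    by (intro add_mono opnorm2_scalar_matrix_le S.opnorm2_le order_refl)
  finally show ?thesis .
qed

lemma rho_ext_le:
  assumes "0 < Im z"
  shows "rho_ext M z \<le> Im z / (pi * (d_rho (dos V) z)\<^sup>2)"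
proof -
  have "Re (mtrace (ImM (M z))) \<le> real CARD('n) * (Im z / (d_rho (dos V) z)\<^sup>2)"
    by (rule Re_mtrace_le_if_loewner_le_scalar_matrix[OF ImM_M_upper[OF assms]])
  then show ?thesis
    by (simp add: rho_ext_def divide_right_mono pos_divide_le_eq mult.commute)
qed

end

theorem lemma3p4:
  fixes A :: "complex^'n^'n"
    and S :: "complex^'n^'n \<Rightarrow> complex^'n^'n"
    and M :: "complex \<Rightarrow> complex^'n^'n"
    and V :: "real set \<Rightarrow> complex^'n^'n"
  assumes "data_pair A S"
    and "solves_MDE A S M"
    and "psd_matrix_measure V" and "V UNIV = mat 1"
    and "stieltjes_rep V M"
  shows "(\<forall>z. 0 < Im z \<longrightarrow>
            opnorm2 (M z) \<le> 1 / d_rho (dos V) z \<and>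
            loewner_le (cscale (complex_of_real (Im z / (opnorm2 (matrix_inv (M z)))\<^sup>2)) (mat 1))
                       (ImM (M z)) \<and>
            loewner_le (ImM (M z))
                       (cscale (complex_of_real (Im z / (d_rho (dos V) z)\<^sup>2)) (mat 1)) \<and>
            opnorm2 (matrix_inv (M z)) \<le> cmod z + opnorm2 A + opnorm_S S * opnorm2 (M z))
       \<and> (\<forall>z. 0 < Im z \<longrightarrow> rho_ext M z \<le> Im z / (pi * (d_rho (dos V) z)\<^sup>2))"
proof -
  interpret MDE_solution A S M V
    using assms by unfold_locales
  show ?thesis
    using opnorm2_M_le ImM_M_lower ImM_M_upper opnorm2_inv_M_le rho_ext_le by blast
qed

end
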